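(* Let $0 < \gamma \le 1/2$, let $(x,z)$ be an optimal extreme point solution of LP-CVRP-MD, let $\delta$ be defined by $\sum_{r \in R}\sum_{v \in C} 2\,c(v,r)\,z^r_{v,v} = (1-\delta)\,\mathrm{opt}_{LP}$, and let $\mathcal P$ be the random collection of paths produced by the sampling procedure described in the context. Then $\mathbb E\left[\sum_{P \in \mathcal P} c(P)\right] \le \gamma\,(1+\delta)\,\mathrm{opt}_{LP}$.
   Context: Problem: nonempty disjoint finite sets $C$ (clients) and $R$ (depots), $V = C\cup R$, a metric $c$ on $V$, integer capacity $k \ge 3$; it is assumed $c(v,R) := \min_{r\in R} c(v,r) > 0$ for every client $v$. Work in the complete bidirected graph on $V$ (directed edges $(a,b)$ of cost $c(a,b)$); for a vector $y$ on directed edges and $S\subseteq V$, $y(\delta^{in}(S))$, $y(\delta^{out}(S))$ are sums over edges entering/leaving $S$. LP-CVRP-MD has variables $x^r_{v,e}\ge 0$ ($r\in R$, $v\in C$, $e$ a directed edge) and $z^r_{v,u}\ge0$ ($r\in R$, $v\in C$, $u\in V$), objective: minimize $\sum_{r,v,e} c(e)x^r_{v,e}$, constraints: (1) $x^r_v(\delta^{out}(u))$ is $2z^r_{v,v}$ if $u=r$, $0$ if $u=v$, $z^r_{v,u}$ otherwise; (2) $x^r_v(\delta^{in}(u))$ is $0$ if $u=r$, $2z^r_{v,v}$ if $u=v$, $z^r_{v,u}$ otherwise (for all $r\in R,v\in C,u\in V$); (3) $x^r_v(\delta^{in}(S))\ge z^r_{v,u}$ whenever $u\in S\subseteq V\setminus\{r\}$;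 (4) $\sum_{r\in R}\sum_{v\in C} z^r_{v,u}=1$ for all $u\in C$; (5) $z^r_{v,u}\le z^r_{v,v}$ for $u,v\in C$; (6) $z^r_{v,u}=0$ if $u,v\in C$ and $c(u,r)>c(v,r)$; (7) $\sum_{u\in C}z^r_{v,u}\le k z^r_{v,v}$. $\mathrm{opt}_{LP}$ is its optimum value. An $r$-branching is a tree rooted at $r$ oriented away from $r$ (not necessarily spanning). Sampling procedure: for each $r\in R$, $v\in C$, take $r$-branchings $B_1,B_2,\dots$ (finitely many) with weights $\mu_i\ge 0$, $\sum_i\mu_i = K_{r,v} := 2\gamma z^r_{v,v}$, such that every directed edge $e$ lies in branchings of total weight at most $\gamma x^r_{v,e}$, $v$ lies on every $B_i$, and every client $u\ne v$ lies in branchings of total weight at least $\gamma z^r_{v,u}$ (such a decomposition exists by a theorem of Bang-Jensen, Frank and Jackson applied to the preflow $\gamma x^r_v$). Independently include each $B_i$ with probability $\mu_i$. For each included branching $B$, form an $r$–$v$ path $P(B)$ by adding the reverse of every edge of $B$ not on the $r$–$v$ path of $B$ and shortcutting the resulting Eulerian $r$–$v$ walk past repeated vertices. Then, while some client lies on two of these paths, remove it from one of them (by shortcutting past it, or truncating the path just before it if it is the last vertex), and discard paths containing no client. $\mathcal P$ is the resulting collection of paths; $c(P)$ is the total edge cost of a path $P$. *)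

theory Defs
  imports "HOL-Probability.Probability" "HOL-Library.Sublist"
begin

definition dedges :: "'a set \<Rightarrow> ('a \<times> 'a) set" where
  "dedges V = {(a, b). a \<in> V \<and> b \<in> V \<and> a \<noteq> b}"

definition delta_in :: "'a set \<Rightarrow> (('a \<times> 'a) \<Rightarrow> real) \<Rightarrow> 'a set \<Rightarrow> real" where
  "delta_in V y S = (\<Sum>e\<in>{e \<in> dedges V. fst e \<notin> S \<and> snd e \<in> S}. y e)"

definition delta_out :: "'a set \<Rightarrow> (('a \<times> 'a) \<Rightarrow> real) \<Rightarrow> 'a set \<Rightarrow> real" where
  "delta_out V y S = (\<Sum>e\<in>{e \<in> dedges V. fst e \<in> S \<and> snd e \<notin> S}. y e)"

definition is_metric_on :: "'a set \<Rightarrow> ('a \<Rightarrow> 'a \<Rightarrow> real) \<Rightarrow> bool" where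
  "is_metric_on V c \<longleftrightarrow>
     (\<forall>a\<in>V. \<forall>b\<in>V. c a b \<ge> 0 \<and> c a b = c b a \<and> (c a b = 0 \<longleftrightarrow> a = b)) \<and>
     (\<forall>a\<in>V. \<forall>b\<in>V. \<forall>d\<in>V. c a d \<le> c a b + c b d)"

text \<open>Variables: x r v e  stands for x^r_{v,e},  z r v u  stands for z^r_{v,u}.
  Outside the index range (r in R, v in C, e a directed edge / u in V) the
  functions are required to be 0, so that the feasible region is a polyhedron
  in the finite-dimensional space of the LP variables.\<close>

definition lp_feasible ::
  "'a set \<Rightarrow> 'a set \<Rightarrow> ('a \<Rightarrow> 'a \<Rightarrow> real) \<Rightarrow> nat \<Rightarrow>
   ('a \<Rightarrow> 'a \<Rightarrow> ('a \<times> 'a) \<Rightarrow> real) \<Rightarrow> ('a \<Rightarrow> 'a \<Rightarrow> 'a \<Rightarrow> real) \<Rightarrow> bool" where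
  "lp_feasible C R c k x z \<longleftrightarrow>
     (let V = C \<union> R in
     \<comment> \<open>index range\<close>
     (\<forall>r v e. x r v e \<noteq> 0 \<longrightarrow> r \<in> R \<and> v \<in> C \<and> e \<in> dedges V) \<and>
     (\<forall>r v u. z r v u \<noteq> 0 \<longrightarrow> r \<in> R \<and> v \<in> C \<and> u \<in> V) \<and>
     \<comment> \<open>nonnegativity\<close>
     (\<forall>r v e. x r v e \<ge> 0) \<and> (\<forall>r v u. z r v u \<ge> 0) \<and>
     \<comment> \<open>(1)\<close>
     (\<forall>r\<in>R. \<forall>v\<in>C. \<forall>u\<in>V.
        delta_out V (x r v) {u} =
          (if u = r then 2 * z r v v else if u = v then 0 else z r v u)) \<and>
     \<comment> \<open>(2)\<close>
     (\<forall>r\<in>R. \<forall>v\<in>C. \<forall>u\<in>V.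
        delta_in V (x r v) {u} =
          (if u = r then 0 else if u = v then 2 * z r v v else z r v u)) \<and>
     \<comment> \<open>(3)\<close>
     (\<forall>r\<in>R. \<forall>v\<in>C. \<forall>u S. u \<in> S \<and> S \<subseteq> V - {r} \<longrightarrow>
        delta_in V (x r v) S \<ge> z r v u) \<and>
     \<comment> \<open>(4)\<close>
     (\<forall>u\<in>C. (\<Sum>r\<in>R. \<Sum>v\<in>C. z r v u) = 1) \<and>
     \<comment> \<open>(5)\<close>
     (\<forall>r\<in>R. \<forall>u\<in>C. \<forall>v\<in>C. z r v u \<le> z r v v) \<and>
     \<comment> \<open>(6)\<close>
     (\<forall>r\<in>R. \<forall>u\<in>C. \<forall>v\<in>C. c u r > c v r \<longrightarrow> z r v u = 0) \<and>
     \<comment> \<open>(7)\<close>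
     (\<forall>r\<in>R. \<forall>v\<in>C. (\<Sum>u\<in>C. z r v u) \<le> real k * z r v v))"

definition lp_obj ::
  "'a set \<Rightarrow> 'a set \<Rightarrow> ('a \<Rightarrow> 'a \<Rightarrow> real) \<Rightarrow> ('a \<Rightarrow> 'a \<Rightarrow> ('a \<times> 'a) \<Rightarrow> real) \<Rightarrow> real" where
  "lp_obj C R c x = (\<Sum>r\<in>R. \<Sum>v\<in>C. \<Sum>e\<in>dedges (C \<union> R). c (fst e) (snd e) * x r v e)"

definition lp_optimal where
  "lp_optimal C R c k x z \<longleftrightarrow> lp_feasible C R c k x z \<and>
     (\<forall>x' z'. lp_feasible C R c k x' z' \<longrightarrow> lp_obj C R c x \<le> lp_obj C R c x')"

definition opt_LP where
  "opt_LP C R c k = (INF p\<in>{(x, z). lp_feasible C R c k x z}. lp_obj C R c (fst p))"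

definition lp_extreme_point where
  "lp_extreme_point C R c k x z \<longleftrightarrow> lp_feasible C R c k x z \<and>
     \<not> (\<exists>x1 z1 x2 z2 (l::real). lp_feasible C R c k x1 z1 \<and> lp_feasible C R c k x2 z2 \<and>
          (x1, z1) \<noteq> (x2, z2) \<and> 0 < l \<and> l < 1 \<and>
          x = (\<lambda>r v e. l * x1 r v e + (1 - l) * x2 r v e) \<and>
          z = (\<lambda>r v u. l * z1 r v u + (1 - l) * z2 r v u))"

definition is_branching :: "'a set \<Rightarrow> 'a \<Rightarrow> ('a \<times> 'a) set \<Rightarrow> bool" where
  "is_branching V r B \<longleftrightarrow> r \<in> V \<and> B \<subseteq> dedges V \<and>
     (\<forall>(a, b)\<in>B. b \<noteq> r \<and> (r, b) \<in> B\<^sup>+) \<and>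
     (\<forall>b. card {a. (a, b) \<in> B} \<le> 1)"

definition bverts :: "'a \<Rightarrow> ('a \<times> 'a) set \<Rightarrow> 'a set" where
  "bverts r B = insert r (snd ` B)"

text \<open>Arcs of the r-v path inside the branching B: exactly the arcs whose head is
  an ancestor of v (or v itself).\<close>
definition path_arcs :: "('a \<times> 'a) set \<Rightarrow> 'a \<Rightarrow> ('a \<times> 'a) set" where
  "path_arcs B v = {(a, b) \<in> B. (b, v) \<in> B\<^sup>*}"

definition walk_arcs :: "'a list \<Rightarrow> ('a \<times> 'a) list" where
  "walk_arcs W = zip W (tl W)"

definition path_cost :: "('a \<Rightarrow> 'a \<Rightarrow> real) \<Rightarrow> 'a list \<Rightarrow> real" where
  "path_cost c P = (\<Sum>(a, b)\<leftarrow>walk_arcs P. c a b)"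

text \<open>P is a possible outcome of P(B): W is an Eulerian r-v walk of the multigraph
  obtained from B by adding the reverse of each arc not on the r-v path of B, and
  P is obtained from W by shortcutting past repeated vertices (a distinct
  subsequence of W visiting every vertex of W, from r to v).\<close>
definition path_of_branching :: "'a \<Rightarrow> 'a \<Rightarrow> ('a \<times> 'a) set \<Rightarrow> 'a list \<Rightarrow> bool" where
  "path_of_branching r v B P \<longleftrightarrow>
     (\<exists>W. W \<noteq> [] \<and> hd W = r \<and> last W = v \<and>
        mset (walk_arcs W) = mset_set B + mset_set (prod.swap ` (B - path_arcs B v)) \<and>
        subseq P W \<and> distinct P \<and> set P = set W \<and> P \<noteq> [] \<and> hd P = r \<and> last P = v)"

definition cleanup_step :: "'a set \<Rightarrow> 'a list multiset \<Rightarrow> 'a list multiset \<Rightarrow> bool" where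
  "cleanup_step C M M' \<longleftrightarrow>
     (\<exists>P Q u. P \<in># M \<and> Q \<in># M - {#P#} \<and> u \<in> C \<and> u \<in> set P \<and> u \<in> set Q \<and>
        M' = M - {#P#} + {#removeAll u P#})"

definition cleanup_final :: "'a set \<Rightarrow> 'a list multiset \<Rightarrow> bool" where
  "cleanup_final C M \<longleftrightarrow>
     \<not> (\<exists>P Q u. P \<in># M \<and> Q \<in># M - {#P#} \<and> u \<in> C \<and> u \<in> set P \<and> u \<in> set Q)"

text \<open>Possible results of the sampling procedure for the outcome omega (omega i says
  whether branching i was included).\<close>
definition sampling_result ::
  "'a set \<Rightarrow> 'i set \<Rightarrow> ('i \<Rightarrow> 'a) \<Rightarrow> ('i \<Rightarrow> 'a) \<Rightarrow> ('i \<Rightarrow> ('a \<times> 'a) set) \<Rightarrow>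
   ('i \<Rightarrow> bool) \<Rightarrow> 'a list multiset \<Rightarrow> bool" where
  "sampling_result C Idx rt tgt br \<omega> \<P> \<longleftrightarrow>
     (\<exists>pth M. (\<forall>i\<in>Idx. \<omega> i \<longrightarrow> path_of_branching (rt i) (tgt i) (br i) (pth i)) \<and>
        (cleanup_step C)\<^sup>*\<^sup>* (image_mset pth (mset_set {i \<in> Idx. \<omega> i})) M \<and>
        cleanup_final C M \<and>
        \<P> = filter_mset (\<lambda>P. set P \<inter> C \<noteq> {}) M)"

text \<open>The branching decomposition used by the sampling procedure: finitely many
  branchings indexed by Idx; branching i belongs to the pair (rt i, tgt i).\<close>
definition valid_decomposition ::
  "'a set \<Rightarrow> 'a set \<Rightarrow> real \<Rightarrow> ('a \<Rightarrow> 'a \<Rightarrow> ('a \<times> 'a) \<Rightarrow> real) \<Rightarrow> ('a \<Rightarrow> 'a \<Rightarrow> 'a \<Rightarrow> real) \<Rightarrow>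
   'i set \<Rightarrow> ('i \<Rightarrow> 'a) \<Rightarrow> ('i \<Rightarrow> 'a) \<Rightarrow> ('i \<Rightarrow> ('a \<times> 'a) set) \<Rightarrow> ('i \<Rightarrow> real) \<Rightarrow> bool" where
  "valid_decomposition C R \<gamma> x z Idx rt tgt br \<mu> \<longleftrightarrow>
     finite Idx \<and>
     (\<forall>i\<in>Idx. rt i \<in> R \<and> tgt i \<in> C \<and> is_branching (C \<union> R) (rt i) (br i) \<and>
        \<mu> i \<ge> 0 \<and> tgt i \<in> bverts (rt i) (br i)) \<and>
     (\<forall>r\<in>R. \<forall>v\<in>C.
        (\<Sum>i\<in>{i\<in>Idx. rt i = r \<and> tgt i = v}. \<mu> i) = 2 * \<gamma> * z r v v \<and>
        (\<forall>e\<in>dedges (C \<union> R).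
           (\<Sum>i\<in>{i\<in>Idx. rt i = r \<and> tgt i = v \<and> e \<in> br i}. \<mu> i) \<le> \<gamma> * x r v e) \<and>
        (\<forall>u\<in>C - {v}.
           (\<Sum>i\<in>{i\<in>Idx. rt i = r \<and> tgt i = v \<and> u \<in> bverts r (br i)}. \<mu> i) \<ge> \<gamma> * z r v u))"

definition sampling_distribution :: "'i set \<Rightarrow> ('i \<Rightarrow> real) \<Rightarrow> ('i \<Rightarrow> bool) pmf" where
  "sampling_distribution Idx \<mu> = Pi_pmf Idx False (\<lambda>i. bernoulli_pmf (\<mu> i))"

end

(*
  A branching B sampled for the pair (r, v) yields a path of cost at most 2 c(B) - c(r, v): the
  Euler walk of B with its off-path arcs doubled costs 2 c(B) minus the cost of the r-v path of B,
  that path costs at least c(r, v), and by the triangle inequality neither shortcutting nor the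
  clean-up increases costs.  Hence branching i contributes at most mu_i (2 c(B_i) - c(r_i, v_i))
  to the expectation.  The arc-load condition of the decomposition bounds sum_i mu_i c(B_i) by
  gamma opt_LP, and sum_i mu_i c(r_i, v_i) = gamma sum 2 c(v, r) z^r_{v,v} = gamma (1 - delta) opt_LP.
  Only finiteness, the metric, optimality of (x, z), the equation defining delta and the
  decomposition are used.
*)

theory Submission
  imports Defs "HOL-Library.Transitive_Closure_Table"
begin

section \<open>Costs of walks and arc sets\<close>

definition arcs_cost :: "('a \<Rightarrow> 'a \<Rightarrow> real) \<Rightarrow> ('a \<times> 'a) set \<Rightarrow> real" where
  "arcs_cost c A = (\<Sum>e\<in>A. c (fst e) (snd e))"

lemma is_metric_on_nonneg: "is_metric_on V c \<Longrightarrow> a \<in> V \<Longrightarrow> b \<in> V \<Longrightarrow> 0 \<le> c a b"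
  by (simp add: is_metric_on_def)

lemma is_metric_on_sym: "is_metric_on V c \<Longrightarrow> a \<in> V \<Longrightarrow> b \<in> V \<Longrightarrow> c a b = c b a"
  by (simp add: is_metric_on_def)

lemma is_metric_on_self: "is_metric_on V c \<Longrightarrow> a \<in> V \<Longrightarrow> c a a = 0"
  by (simp add: is_metric_on_def)

lemma is_metric_on_triangle:
  "is_metric_on V c \<Longrightarrow> a \<in> V \<Longrightarrow> b \<in> V \<Longrightarrow> d \<in> V \<Longrightarrow> c a d \<le> c a b + c b d"
  by (simp add: is_metric_on_def)

lemma walk_arcs_singleton [simp]: "walk_arcs [a] = []"
  by (simp add: walk_arcs_def)

lemma walk_arcs_Cons_Cons [simp]: "walk_arcs (a # b # P) = (a, b) # walk_arcs (b # P)"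
  by (simp add: walk_arcs_def)

lemma path_cost_Nil [simp]: "path_cost c [] = 0"
  by (simp add: path_cost_def walk_arcs_def)

lemma path_cost_singleton [simp]: "path_cost c [a] = 0"
  by (simp add: path_cost_def)

lemma path_cost_Cons_Cons [simp]: "path_cost c (a # b # P) = c a b + path_cost c (b # P)"
  by (simp add: path_cost_def)

lemma path_cost_nonneg:
  assumes "is_metric_on V c" "set P \<subseteq> V"
  shows "0 \<le> path_cost c P"
  using assms(2) by (induction P rule: induct_list012)
    (auto intro!: add_nonneg_nonneg is_metric_on_nonneg[OF assms(1)])

lemma path_cost_le_Cons:
  assumes "is_metric_on V c" "set (a # P) \<subseteq> V"
  shows "path_cost c P \<le> path_cost c (a # P)"
  using assms by (cases P) (auto intro: is_metric_on_nonneg)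

lemma path_cost_skip_le:
  assumes "is_metric_on V c" "set (a # b # P) \<subseteq> V"
  shows "path_cost c (a # P) \<le> path_cost c (a # b # P)"
proof (cases P)
  case Nil
  then show ?thesis using assms by (auto intro: is_metric_on_nonneg)
next
  case (Cons d P')
  then show ?thesis using assms is_metric_on_triangle[OF assms(1), of a b d] by auto
qed

lemma path_cost_Cons_subseq_le:
  assumes "is_metric_on V c" "subseq Q P" "set (a # P) \<subseteq> V"
  shows "path_cost c (a # Q) \<le> path_cost c (a # P)"
  using assms(2,3)
proof (induction Q P arbitrary: a rule: list_emb.induct)
  case (list_emb_Nil P)
  then show ?case using path_cost_nonneg[OF assms(1)] by simp
next
  case (list_emb_Cons Q P b)
  then have "path_cost c (a # Q) \<le> path_cost c (a # P)" by simp
  also have "\<dots> \<le> path_cost c (a # b # P)"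
    using path_cost_skip_le[OF assms(1) list_emb_Cons.prems] .
  finally show ?case .
next
  case (list_emb_Cons2 b b' Q P)
  then show ?case by simp
qed

lemma path_cost_subseq_le:
  assumes "is_metric_on V c" "subseq Q P" "set P \<subseteq> V"
  shows "path_cost c Q \<le> path_cost c P"
  using assms(2,3)
proof (induction Q P rule: list_emb.induct)
  case (list_emb_Nil P)
  then show ?case using path_cost_nonneg[OF assms(1)] by simp
next
  case (list_emb_Cons Q P b)
  then show ?case using path_cost_le_Cons[OF assms(1), of b P] by simp
next
  case (list_emb_Cons2 b b' Q P)
  then show ?case using path_cost_Cons_subseq_le[OF assms(1)] by simp
qed

lemma metric_le_path_cost:
  assumes "is_metric_on V c" "P \<noteq> []" "set P \<subseteq> V"
  shows "c (hd P) (last P) \<le> path_cost c P"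
proof -
  obtain a P' where P: "P = a # P'" using assms(2) by (cases P) auto
  show ?thesis
  proof (cases "P' = []")
    case True
    then show ?thesis using P assms is_metric_on_self by fastforce
  next
    case False
    then have "subseq [a, last P'] P" by (simp add: P subseq_singleton_left)
    from path_cost_subseq_le[OF assms(1) this assms(3)] show ?thesis
      using False by (simp add: P)
  qed
qed

lemma path_cost_distinct:
  assumes "distinct P"
  shows "path_cost c P = arcs_cost c (set (walk_arcs P))"
  using distinct_zipI1[OF assms, of "tl P"]
  by (simp add: path_cost_def arcs_cost_def walk_arcs_def sum_list_distinct_conv_sum_set case_prod_unfold)

lemma path_cost_eq_sum_mset: "path_cost c P = (\<Sum>e\<in>#mset (walk_arcs P). c (fst e) (snd e))"
  by (simp add: path_cost_def case_prod_unfold sum_mset_sum_list[symmetric])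

lemma set_walk_subset:
  assumes "W \<noteq> []" "hd W \<in> V" "set (walk_arcs W) \<subseteq> dedges V"
  shows "set W \<subseteq> V"
  using assms by (induction W rule: induct_list012) (auto simp: dedges_def)

lemma finite_dedges: "finite V \<Longrightarrow> finite (dedges V)"
  unfolding dedges_def by (rule finite_subset[of _ "V \<times> V"]) auto

lemma arcs_cost_nonneg: "is_metric_on V c \<Longrightarrow> A \<subseteq> dedges V \<Longrightarrow> 0 \<le> arcs_cost c A"
  unfolding arcs_cost_def dedges_def by (rule sum_nonneg) (auto intro: is_metric_on_nonneg)

lemma arcs_cost_mono:
  assumes "is_metric_on V c" "finite A'" "A \<subseteq> A'" "A' \<subseteq> dedges V"
  shows "arcs_cost c A \<le> arcs_cost c A'"
  unfolding arcs_cost_def using assms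
  by (intro sum_mono2) (auto simp: dedges_def intro: is_metric_on_nonneg)

lemma arcs_cost_swap:
  assumes m: "is_metric_on V c" and A: "A \<subseteq> dedges V"
  shows "arcs_cost c (prod.swap ` A) = arcs_cost c A"
proof -
  have "arcs_cost c (prod.swap ` A) = (\<Sum>e\<in>A. c (snd e) (fst e))"
    by (simp add: arcs_cost_def sum.reindex)
  also have "\<dots> = arcs_cost c A"
    unfolding arcs_cost_def using A
    by (intro sum.cong) (use is_metric_on_sym[OF m] in \<open>auto simp: dedges_def\<close>)
  finally show ?thesis .
qed

lemma swap_image_dedges: "A \<subseteq> dedges V \<Longrightarrow> prod.swap ` A \<subseteq> dedges V"
  by (auto simp: dedges_def)

section \<open>Branchings and their paths\<close>

lemma branching_root: "is_branching V r B \<Longrightarrow> r \<in> V"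
  by (simp add: is_branching_def)

lemma branching_subset_dedges: "is_branching V r B \<Longrightarrow> B \<subseteq> dedges V"
  by (simp add: is_branching_def)

lemma finite_branching: "finite V \<Longrightarrow> is_branching V r B \<Longrightarrow> finite B"
  by (rule finite_subset[OF branching_subset_dedges finite_dedges])

lemma bverts_reachable:
  assumes "is_branching V r B" "v \<in> bverts r B"
  shows "(r, v) \<in> B\<^sup>*"
  using assms by (auto simp: is_branching_def bverts_def intro: trancl_into_rtrancl)

lemma rtrancl_path_walk_arcs:
  "rtrancl_path (\<lambda>a b. (a, b) \<in> B) x xs y \<Longrightarrow> set (walk_arcs (x # xs)) \<subseteq> path_arcs B y"
proof (induction rule: rtrancl_path.induct)
  case (base x)
  then show ?case by simp
next
  case (step x y ys z)
  then have "(\<lambda>a b. (a, b) \<in> B)\<^sup>*\<^sup>* y z"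
    using rtranclp_eq_rtrancl_path by metis
  then have "(y, z) \<in> B\<^sup>*"
    by (simp add: rtranclp_rtrancl_eq)
  with step show ?case by (auto simp: path_arcs_def)
qed

lemma metric_le_path_arcs_cost:
  assumes m: "is_metric_on V c" and "finite V" and br: "is_branching V r B" and v: "v \<in> bverts r B"
  shows "c r v \<le> arcs_cost c (path_arcs B v)"
proof -
  have "(\<lambda>a b. (a, b) \<in> B)\<^sup>*\<^sup>* r v"
    using bverts_reachable[OF br v] by (simp add: rtranclp_rtrancl_eq)
  then obtain ys where ys: "rtrancl_path (\<lambda>a b. (a, b) \<in> B) r ys v"
    and distinct: "distinct (r # ys)"
    by (metis rtranclp_eq_rtrancl_path rtrancl_path_distinct)
  have last: "last (r # ys) = v"
  proof (cases "ys = []")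
    case True
    with ys show ?thesis by (cases rule: rtrancl_path.cases) auto
  next
    case False
    with rtrancl_path_last[OF ys False] show ?thesis by simp
  qed
  have arcs: "set (walk_arcs (r # ys)) \<subseteq> path_arcs B v"
    using rtrancl_path_walk_arcs[OF ys] .
  have "set (walk_arcs (r # ys)) \<subseteq> dedges V"
    using arcs branching_subset_dedges[OF br] by (auto simp: path_arcs_def)
  then have "set (r # ys) \<subseteq> V"
    using set_walk_subset branching_root[OF br] by fastforce
  from metric_le_path_cost[OF m _ this] have "c r v \<le> path_cost c (r # ys)"
    using last by simp
  also have "\<dots> = arcs_cost c (set (walk_arcs (r # ys)))"
    using distinct by (rule path_cost_distinct)
  also have "\<dots> \<le> arcs_cost c (path_arcs B v)"
    using arcs branching_subset_dedges[OF br] finite_branching[OF \<open>finite V\<close> br]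
    by (intro arcs_cost_mono[OF m]) (auto simp: path_arcs_def intro: finite_subset)
  finally show ?thesis .
qed

lemma metric_le_branching_cost:
  assumes "is_metric_on V c" "finite V" "is_branching V r B" "v \<in> bverts r B"
  shows "c r v \<le> arcs_cost c B"
proof -
  have "path_arcs B v \<subseteq> B" by (auto simp: path_arcs_def)
  then show ?thesis
    using metric_le_path_arcs_cost[OF assms] assms branching_subset_dedges finite_branching
    by (meson arcs_cost_mono order.trans)
qed

lemma branching_cost_bound_nonneg:
  assumes "is_metric_on V c" "finite V" "is_branching V r B" "v \<in> bverts r B"
  shows "0 \<le> 2 * arcs_cost c B - c r v"
  using metric_le_branching_cost[OF assms] arcs_cost_nonneg[OF assms(1) branching_subset_dedges[OF assms(3)]]
  by simp

lemma euler_walk_cost: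
  assumes m: "is_metric_on V c" and "finite B" "B \<subseteq> dedges V" "A \<subseteq> B"
    and W: "mset (walk_arcs W) = mset_set B + mset_set (prod.swap ` (B - A))"
  shows "path_cost c W = 2 * arcs_cost c B - arcs_cost c A"
proof -
  have "path_cost c W = arcs_cost c B + arcs_cost c (prod.swap ` (B - A))"
    unfolding path_cost_eq_sum_mset W arcs_cost_def using \<open>finite B\<close>
    by (simp add: sum_unfold_sum_mset)
  also have "arcs_cost c (prod.swap ` (B - A)) = arcs_cost c (B - A)"
    using assms by (intro arcs_cost_swap[OF m]) auto
  also have "\<dots> = arcs_cost c B - arcs_cost c A"
    using assms by (simp add: arcs_cost_def sum_diff)
  finally show ?thesis by simp
qed

lemma path_of_branching_walk:
  assumes "finite V" and br: "is_branching V r B" and "path_of_branching r v B P"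
  obtains W where "set W \<subseteq> V" "subseq P W" "set P = set W"
    "mset (walk_arcs W) = mset_set B + mset_set (prod.swap ` (B - path_arcs B v))"
proof -
  obtain W where W: "W \<noteq> []" "hd W = r" "subseq P W" "set P = set W"
    and arcs: "mset (walk_arcs W) = mset_set B + mset_set (prod.swap ` (B - path_arcs B v))"
    using assms(3) unfolding path_of_branching_def by blast
  have "set (walk_arcs W) = B \<union> prod.swap ` (B - path_arcs B v)"
    using arg_cong[OF arcs, of set_mset] finite_branching[OF \<open>finite V\<close> br] by simp
  also have "\<dots> \<subseteq> dedges V"
    using branching_subset_dedges[OF br] swap_image_dedges[of "B - path_arcs B v" V] by blast
  finally have "set W \<subseteq> V"
    using set_walk_subset W(1,2) branching_root[OF br] by blast
  then show thesis
    using that W(3,4) arcs by blast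
qed

lemma path_of_branching_subset:
  "finite V \<Longrightarrow> is_branching V r B \<Longrightarrow> path_of_branching r v B P \<Longrightarrow> set P \<subseteq> V"
  by (metis path_of_branching_walk)

lemma path_of_branching_cost_le:
  assumes m: "is_metric_on V c" and "finite V" and br: "is_branching V r B"
    and v: "v \<in> bverts r B" and P: "path_of_branching r v B P"
  shows "path_cost c P \<le> 2 * arcs_cost c B - c r v"
proof -
  obtain W where W: "set W \<subseteq> V" "subseq P W"
    and arcs: "mset (walk_arcs W) = mset_set B + mset_set (prod.swap ` (B - path_arcs B v))"
    by (rule path_of_branching_walk[OF \<open>finite V\<close> br P])
  have "path_cost c P \<le> path_cost c W"
    using path_cost_subseq_le[OF m W(2,1)] .
  also have "\<dots> = 2 * arcs_cost c B - arcs_cost c (path_arcs B v)"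
    by (rule euler_walk_cost[OF m finite_branching[OF \<open>finite V\<close> br]
          branching_subset_dedges[OF br] _ arcs]) (auto simp: path_arcs_def)
  also have "\<dots> \<le> 2 * arcs_cost c B - c r v"
    using metric_le_path_arcs_cost[OF m \<open>finite V\<close> br v] by simp
  finally show ?thesis .
qed

section \<open>Clean-up of the sampled paths\<close>

lemma sum_mset_filter_le:
  fixes f :: "'a \<Rightarrow> 'b::ordered_comm_monoid_add"
  assumes "\<And>x. x \<in># M \<Longrightarrow> 0 \<le> f x"
  shows "(\<Sum>x\<in>#filter_mset P M. f x) \<le> (\<Sum>x\<in>#M. f x)"
  using assms by (induction M) (auto intro: add_mono add_increasing)

lemma cleanup_step_cost_le:
  assumes m: "is_metric_on V c" and step: "cleanup_step C M M'" and M: "\<forall>P\<in>#M. set P \<subseteq> V"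
  shows "(\<forall>P\<in>#M'. set P \<subseteq> V) \<and> (\<Sum>P\<in>#M'. path_cost c P) \<le> (\<Sum>P\<in>#M. path_cost c P)"
proof
  obtain P u where P: "P \<in># M" and M': "M' = M - {#P#} + {#removeAll u P#}"
    using step unfolding cleanup_step_def by blast
  have PV: "set P \<subseteq> V" using M P by blast
  then show "\<forall>Q\<in>#M'. set Q \<subseteq> V"
    using M unfolding M' by (auto dest: in_diffD)
  have "(\<Sum>Q\<in>#M'. path_cost c Q) = path_cost c (removeAll u P) + (\<Sum>Q\<in>#M - {#P#}. path_cost c Q)"
    unfolding M' by simp
  also have "\<dots> \<le> path_cost c P + (\<Sum>Q\<in>#M - {#P#}. path_cost c Q)"
    using path_cost_subseq_le[OF m _ PV] by (simp add: removeAll_filter_not_eq)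
  also have "\<dots> = (\<Sum>Q\<in>#M. path_cost c Q)"
    by (metis P image_mset_add_mset insert_DiffM sum_mset.add_mset)
  finally show "(\<Sum>Q\<in>#M'. path_cost c Q) \<le> (\<Sum>Q\<in>#M. path_cost c Q)" .
qed

lemma cleanup_steps_cost_le:
  assumes m: "is_metric_on V c" and steps: "(cleanup_step C)\<^sup>*\<^sup>* M M'" and M: "\<forall>P\<in>#M. set P \<subseteq> V"
  shows "(\<forall>P\<in>#M'. set P \<subseteq> V) \<and> (\<Sum>P\<in>#M'. path_cost c P) \<le> (\<Sum>P\<in>#M. path_cost c P)"
  using steps
proof (induction rule: rtranclp_induct)
  case base
  then show ?case using M by simp
next
  case (step M1 M2)
  then show ?case using cleanup_step_cost_le[OF m step.hyps(2)] by fastforce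
qed

lemma sampling_result_cost_le:
  assumes m: "is_metric_on V c" and "finite V" and "finite Idx"
    and br: "\<And>i. i \<in> Idx \<Longrightarrow> is_branching V (rt i) (br i) \<and> tgt i \<in> bverts (rt i) (br i)"
    and sr: "sampling_result C Idx rt tgt br \<omega> Ps"
  shows "(\<Sum>P\<in>#Ps. path_cost c P)
    \<le> (\<Sum>i\<in>Idx. if \<omega> i then 2 * arcs_cost c (br i) - c (rt i) (tgt i) else 0)"
proof -
  define S where "S = {i \<in> Idx. \<omega> i}"
  obtain pth M where pth: "\<And>i. i \<in> S \<Longrightarrow> path_of_branching (rt i) (tgt i) (br i) (pth i)"
    and steps: "(cleanup_step C)\<^sup>*\<^sup>* (image_mset pth (mset_set S)) M"
    and Ps: "Ps = filter_mset (\<lambda>P. set P \<inter> C \<noteq> {}) M"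
    using sr unfolding sampling_result_def S_def by auto
  have "finite S" using \<open>finite Idx\<close> by (simp add: S_def)
  have "set (pth i) \<subseteq> V" if "i \<in> S" for i
    using that by (intro path_of_branching_subset[OF \<open>finite V\<close> conjunct1[OF br] pth])
      (simp_all add: S_def)
  then have "\<forall>P\<in>#image_mset pth (mset_set S). set P \<subseteq> V"
    using \<open>finite S\<close> by simp
  note cleanup = cleanup_steps_cost_le[OF m steps this]
  have "(\<Sum>P\<in>#Ps. path_cost c P) \<le> (\<Sum>P\<in>#M. path_cost c P)"
    unfolding Ps using cleanup path_cost_nonneg[OF m] by (intro sum_mset_filter_le) blast
  also have "\<dots> \<le> (\<Sum>P\<in>#image_mset pth (mset_set S). path_cost c P)"
    using cleanup by blast
  also have "\<dots> = (\<Sum>i\<in>S. path_cost c (pth i))"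
    by (simp add: sum_unfold_sum_mset image_mset.compositionality comp_def)
  also have "\<dots> \<le> (\<Sum>i\<in>S. 2 * arcs_cost c (br i) - c (rt i) (tgt i))"
    using path_of_branching_cost_le[OF m \<open>finite V\<close>] br pth by (intro sum_mono) (auto simp: S_def)
  also have "\<dots> = (\<Sum>i\<in>Idx. if \<omega> i then 2 * arcs_cost c (br i) - c (rt i) (tgt i) else 0)"
    unfolding S_def using \<open>finite Idx\<close> by (simp add: sum.inter_filter)
  finally show ?thesis .
qed

section \<open>The sampling distribution\<close>

lemma finite_set_pmf_sampling_distribution:
  assumes "finite Idx"
  shows "finite (set_pmf (sampling_distribution Idx \<mu>))"
proof -
  have "set_pmf (sampling_distribution Idx \<mu>) \<subseteq> {\<omega>. \<forall>i. i \<notin> Idx \<longrightarrow> \<omega> i = False}"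
    unfolding sampling_distribution_def by (rule set_Pi_pmf_subset[OF assms])
  also have "\<dots> \<subseteq> (\<lambda>S i. i \<in> S) ` Pow Idx"
  proof
    fix \<omega> :: "'a \<Rightarrow> bool"
    assume "\<omega> \<in> {\<omega>. \<forall>i. i \<notin> Idx \<longrightarrow> \<omega> i = False}"
    then have "Collect \<omega> \<in> Pow Idx" by auto
    then show "\<omega> \<in> (\<lambda>S i. i \<in> S) ` Pow Idx" by (intro image_eqI[of _ _ "Collect \<omega>"]) auto
  qed
  finally show ?thesis using assms by (meson finite_Pow_iff finite_imageI finite_subset)
qed

text \<open>bernoulli_pmf clips its parameter to [0, 1], so the weights \<mu> i may exceed 1.\<close>
lemma pmf_bernoulli_True_le: "0 \<le> p \<Longrightarrow> pmf (bernoulli_pmf p) True \<le> p"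
  using pmf_le_1[of "bernoulli_pmf p" True] by (cases "p \<le> 1") auto

lemma expectation_sampled_le:
  assumes "finite Idx" "i \<in> Idx" "0 \<le> a" "0 \<le> \<mu> i"
  shows "measure_pmf.expectation (sampling_distribution Idx \<mu>) (\<lambda>\<omega>. if \<omega> i then a else 0) \<le> \<mu> i * a"
proof -
  have "measure_pmf.expectation (sampling_distribution Idx \<mu>) (\<lambda>\<omega>. if \<omega> i then a else 0)
      = measure_pmf.expectation (map_pmf (\<lambda>\<omega>. \<omega> i) (sampling_distribution Idx \<mu>)) (\<lambda>b. if b then a else 0)"
    by simp
  also have "map_pmf (\<lambda>\<omega>. \<omega> i) (sampling_distribution Idx \<mu>) = bernoulli_pmf (\<mu> i)"
    unfolding sampling_distribution_def
    using Pi_pmf_component[OF assms(1), of i False "\<lambda>i. bernoulli_pmf (\<mu> i)"] assms(2) by simp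
  also have "measure_pmf.expectation (bernoulli_pmf (\<mu> i)) (\<lambda>b. if b then a else 0)
      = pmf (bernoulli_pmf (\<mu> i)) True * a"
    by (subst integral_measure_pmf[of "{True}"]) (auto split: if_splits)
  also have "\<dots> \<le> \<mu> i * a"
    using assms(3,4) pmf_bernoulli_True_le by (simp add: mult_right_mono)
  finally show ?thesis .
qed

lemma expectation_sampled_sum_le:
  assumes "finite Idx" "\<And>i. i \<in> Idx \<Longrightarrow> 0 \<le> \<mu> i" "\<And>i. i \<in> Idx \<Longrightarrow> 0 \<le> G i"
  shows "measure_pmf.expectation (sampling_distribution Idx \<mu>) (\<lambda>\<omega>. \<Sum>i\<in>Idx. if \<omega> i then G i else 0)
    \<le> (\<Sum>i\<in>Idx. \<mu> i * G i)"
proof -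
  have "measure_pmf.expectation (sampling_distribution Idx \<mu>) (\<lambda>\<omega>. \<Sum>i\<in>Idx. if \<omega> i then G i else 0)
      = (\<Sum>i\<in>Idx. measure_pmf.expectation (sampling_distribution Idx \<mu>) (\<lambda>\<omega>. if \<omega> i then G i else 0))"
    using finite_set_pmf_sampling_distribution[OF assms(1)]
    by (intro Bochner_Integration.integral_sum integrable_measure_pmf_finite)
  also have "\<dots> \<le> (\<Sum>i\<in>Idx. \<mu> i * G i)"
    using assms by (intro sum_mono expectation_sampled_le)
  finally show ?thesis .
qed

section \<open>The branching decomposition and the LP\<close>

lemma lp_optimal_obj_eq_opt_LP:
  assumes "lp_optimal C R c k x z"
  shows "lp_obj C R c x = opt_LP C R c k"
  unfolding opt_LP_def
proof (rule cInf_eq_minimum[symmetric])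
  show "lp_obj C R c x \<in> (\<lambda>p. lp_obj C R c (fst p)) ` {(x, z). lp_feasible C R c k x z}"
    using assms unfolding lp_optimal_def by (intro image_eqI[of _ _ "(x, z)"]) auto
  show "lp_obj C R c x \<le> y" if "y \<in> (\<lambda>p. lp_obj C R c (fst p)) ` {(x, z). lp_feasible C R c k x z}" for y
    using that assms unfolding lp_optimal_def by auto
qed

lemma sum_by_root_target:
  assumes "finite Idx" "finite R" "finite C" "\<And>i. i \<in> Idx \<Longrightarrow> rt i \<in> R \<and> tgt i \<in> C"
  shows "(\<Sum>i\<in>Idx. f i) = (\<Sum>r\<in>R. \<Sum>v\<in>C. \<Sum>i\<in>{i\<in>Idx. rt i = r \<and> tgt i = v}. f i)"
proof -
  have "(\<Sum>i\<in>Idx. f i) = (\<Sum>p\<in>R \<times> C. \<Sum>i\<in>{i\<in>Idx. (rt i, tgt i) = p}. f i)"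
    using assms by (intro sum.group[symmetric]) auto
  then show ?thesis by (simp add: sum.cartesian_product case_prod_unfold prod_eq_iff)
qed

lemma sum_weighted_arcs_cost:
  assumes "finite I" "finite D" "\<And>i. i \<in> I \<Longrightarrow> A i \<subseteq> D"
  shows "(\<Sum>i\<in>I. \<mu> i * arcs_cost c (A i))
    = (\<Sum>e\<in>D. c (fst e) (snd e) * (\<Sum>i\<in>{i\<in>I. e \<in> A i}. \<mu> i))"
proof -
  have "(\<Sum>i\<in>I. \<mu> i * arcs_cost c (A i))
      = (\<Sum>i\<in>I. \<Sum>e\<in>D. if e \<in> A i then \<mu> i * c (fst e) (snd e) else 0)"
  proof (rule sum.cong[OF refl])
    fix i assume "i \<in> I"
    then have "A i = D \<inter> A i" using assms(3) by blast
    then show "\<mu> i * arcs_cost c (A i) = (\<Sum>e\<in>D. if e \<in> A i then \<mu> i * c (fst e) (snd e) else 0)"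
      using assms(2) by (metis arcs_cost_def sum.inter_restrict sum_distrib_left)
  qed
  also have "\<dots> = (\<Sum>e\<in>D. \<Sum>i\<in>I. if e \<in> A i then \<mu> i * c (fst e) (snd e) else 0)"
    by (rule sum.swap)
  also have "\<dots> = (\<Sum>e\<in>D. c (fst e) (snd e) * (\<Sum>i\<in>{i\<in>I. e \<in> A i}. \<mu> i))"
    using assms(1) by (simp add: sum.inter_filter sum_distrib_left if_distrib mult.commute cong: if_cong)
  finally show ?thesis .
qed

lemma decomposition_arcs_cost_le:
  assumes m: "is_metric_on (C \<union> R) c" and "finite C" "finite R"
    and vd: "valid_decomposition C R \<gamma> x z Idx rt tgt br \<mu>"
  shows "(\<Sum>i\<in>Idx. \<mu> i * arcs_cost c (br i)) \<le> \<gamma> * lp_obj C R c x"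
proof -
  let ?D = "dedges (C \<union> R)"
  define I where "I r v = {i\<in>Idx. rt i = r \<and> tgt i = v}" for r v
  have "finite Idx" using vd by (simp add: valid_decomposition_def)
  have "(\<Sum>i\<in>Idx. \<mu> i * arcs_cost c (br i)) = (\<Sum>r\<in>R. \<Sum>v\<in>C. \<Sum>i\<in>I r v. \<mu> i * arcs_cost c (br i))"
    unfolding I_def using vd \<open>finite Idx\<close> assms(2,3)
    by (intro sum_by_root_target) (auto simp: valid_decomposition_def)
  also have "\<dots> = (\<Sum>r\<in>R. \<Sum>v\<in>C. \<Sum>e\<in>?D. c (fst e) (snd e) * (\<Sum>i\<in>{i\<in>I r v. e \<in> br i}. \<mu> i))"
    using vd \<open>finite Idx\<close> assms(2,3)
    by (intro sum.cong refl sum_weighted_arcs_cost finite_dedges)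
      (auto simp: I_def valid_decomposition_def dest: branching_subset_dedges)
  also have "\<dots> \<le> (\<Sum>r\<in>R. \<Sum>v\<in>C. \<Sum>e\<in>?D. c (fst e) (snd e) * (\<gamma> * x r v e))"
    using vd is_metric_on_nonneg[OF m]
    by (intro sum_mono mult_left_mono) (auto simp: I_def valid_decomposition_def dedges_def conj_assoc)
  also have "\<dots> = \<gamma> * lp_obj C R c x"
    by (simp add: lp_obj_def sum_distrib_left mult_ac)
  finally show ?thesis .
qed

lemma decomposition_root_target_cost:
  assumes m: "is_metric_on (C \<union> R) c" and "finite C" "finite R"
    and vd: "valid_decomposition C R \<gamma> x z Idx rt tgt br \<mu>"
  shows "(\<Sum>i\<in>Idx. \<mu> i * c (rt i) (tgt i)) = \<gamma> * (\<Sum>r\<in>R. \<Sum>v\<in>C. 2 * c v r * z r v v)"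
proof -
  define I where "I r v = {i\<in>Idx. rt i = r \<and> tgt i = v}" for r v
  have "finite Idx" using vd by (simp add: valid_decomposition_def)
  have "(\<Sum>i\<in>Idx. \<mu> i * c (rt i) (tgt i)) = (\<Sum>r\<in>R. \<Sum>v\<in>C. \<Sum>i\<in>I r v. \<mu> i * c (rt i) (tgt i))"
    unfolding I_def using vd \<open>finite Idx\<close> assms(2,3)
    by (intro sum_by_root_target) (auto simp: valid_decomposition_def)
  also have "\<dots> = (\<Sum>r\<in>R. \<Sum>v\<in>C. \<gamma> * (2 * c v r * z r v v))"
  proof (intro sum.cong refl)
    fix r v assume rv: "r \<in> R" "v \<in> C"
    have "(\<Sum>i\<in>I r v. \<mu> i * c (rt i) (tgt i)) = (\<Sum>i\<in>I r v. \<mu> i) * c r v"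
      by (simp add: I_def sum_distrib_right)
    also have "\<dots> = \<gamma> * (2 * c v r * z r v v)"
      using vd rv is_metric_on_sym[OF m, of r v] by (simp add: I_def valid_decomposition_def)
    finally show "(\<Sum>i\<in>I r v. \<mu> i * c (rt i) (tgt i)) = \<gamma> * (2 * c v r * z r v v)" .
  qed
  finally show ?thesis by (simp add: sum_distrib_left)
qed

theorem lemma3:
  fixes C R :: "'a set" and c :: "'a \<Rightarrow> 'a \<Rightarrow> real" and k :: nat
    and x :: "'a \<Rightarrow> 'a \<Rightarrow> ('a \<times> 'a) \<Rightarrow> real" and z :: "'a \<Rightarrow> 'a \<Rightarrow> 'a \<Rightarrow> real"
    and \<gamma> \<delta> :: real
    and Idx :: "'i set" and rt tgt :: "'i \<Rightarrow> 'a" and br :: "'i \<Rightarrow> ('a \<times> 'a) set"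
    and \<mu> :: "'i \<Rightarrow> real"
    and res :: "('i \<Rightarrow> bool) \<Rightarrow> 'a list multiset"
  assumes "finite C" "finite R" "C \<noteq> {}" "R \<noteq> {}" "C \<inter> R = {}"
    and "is_metric_on (C \<union> R) c"
    and "k \<ge> 3"
    and "\<forall>v\<in>C. (MIN r\<in>R. c v r) > 0"
    and "0 < \<gamma>" "\<gamma> \<le> 1 / 2"
    and "lp_optimal C R c k x z"
    and "lp_extreme_point C R c k x z"
    and "(\<Sum>r\<in>R. \<Sum>v\<in>C. 2 * c v r * z r v v) = (1 - \<delta>) * opt_LP C R c k"
    and "valid_decomposition C R \<gamma> x z Idx rt tgt br \<mu>"
    and "\<forall>\<omega>\<in>set_pmf (sampling_distribution Idx \<mu>).
           sampling_result C Idx rt tgt br \<omega> (res \<omega>)"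
  shows "measure_pmf.expectation (sampling_distribution Idx \<mu>)
           (\<lambda>\<omega>. \<Sum>P\<in>#res \<omega>. path_cost c P)
         \<le> \<gamma> * (1 + \<delta>) * opt_LP C R c k"
proof -
  let ?\<Omega> = "sampling_distribution Idx \<mu>"
  define G where "G i = 2 * arcs_cost c (br i) - c (rt i) (tgt i)" for i
  have m: "is_metric_on (C \<union> R) c" and fin: "finite (C \<union> R)"
    and vd: "valid_decomposition C R \<gamma> x z Idx rt tgt br \<mu>"
    using assms by simp_all
  have "finite Idx" using vd by (simp add: valid_decomposition_def)
  have br: "is_branching (C \<union> R) (rt i) (br i) \<and> tgt i \<in> bverts (rt i) (br i)"
    and \<mu>_nonneg: "0 \<le> \<mu> i" if "i \<in> Idx" for i
    using vd that by (simp_all add: valid_decomposition_def)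
  have G_nonneg: "0 \<le> G i" if "i \<in> Idx" for i
    unfolding G_def using br[OF that] by (intro branching_cost_bound_nonneg[OF m fin]) simp_all
  have "(\<Sum>P\<in>#res \<omega>. path_cost c P) \<le> (\<Sum>i\<in>Idx. if \<omega> i then G i else 0)"
    if "\<omega> \<in> set_pmf ?\<Omega>" for \<omega>
    unfolding G_def using assms(15) that br
    by (intro sampling_result_cost_le[OF m fin \<open>finite Idx\<close>]) auto
  then have "measure_pmf.expectation ?\<Omega> (\<lambda>\<omega>. \<Sum>P\<in>#res \<omega>. path_cost c P)
      \<le> measure_pmf.expectation ?\<Omega> (\<lambda>\<omega>. \<Sum>i\<in>Idx. if \<omega> i then G i else 0)"
    using finite_set_pmf_sampling_distribution[OF \<open>finite Idx\<close>]
    by (intro integral_mono_AE integrable_measure_pmf_finite AE_pmfI)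
  also have "\<dots> \<le> (\<Sum>i\<in>Idx. \<mu> i * G i)"
    using expectation_sampled_sum_le[OF \<open>finite Idx\<close> \<mu>_nonneg G_nonneg] .
  also have "\<dots> = 2 * (\<Sum>i\<in>Idx. \<mu> i * arcs_cost c (br i)) - (\<Sum>i\<in>Idx. \<mu> i * c (rt i) (tgt i))"
    by (simp add: G_def algebra_simps sum_subtractf sum_distrib_left)
  also have "\<dots> \<le> 2 * (\<gamma> * opt_LP C R c k) - \<gamma> * ((1 - \<delta>) * opt_LP C R c k)"
    using decomposition_arcs_cost_le[OF m assms(1,2) vd]
      decomposition_root_target_cost[OF m assms(1,2) vd]
      lp_optimal_obj_eq_opt_LP[OF assms(11)] assms(13) by simp
  also have "\<dots> = \<gamma> * (1 + \<delta>) * opt_LP C R c k"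
    by (simp add: algebra_simps)
  finally show ?thesis .
qed

end
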